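(* Let $N\in\mathbb{N}$. For a function $f:\mathbb{R}^N\to\mathbb{R}$, $V>0$ and $p\in(0,\infty)$ define $$\|f\|_{p,V}:=\sup\Big\{\Big(\frac{1}{|\Omega|}\int_{\Omega}|f(x)|^{p}\,dx\Big)^{1/p} : \Omega\subset\mathbb{R}^N \text{ open and convex},\ |\Omega|=V\Big\},$$ and let $L^p_V:=\{f\mid \|f\|_{p,V}<\infty\}$ modulo functions vanishing almost everywhere. Let $p\in[1,\infty)$ and $0<T<S$. Then for all $f\in L^p_S$, $$\|f\|_{p,S}^{p}\leq\frac{(\lfloor S/T\rfloor+1)\,T}{S}\,\|f\|_{p,T}^{p}\leq 2\,\|f\|_{p,T}^{p}.$$
   Context: $|\Omega|$ denotes the $N$-dimensional Lebesgue measure; functions are measurable; $\|f\|_{p,T}$ takes values in $[0,\infty]$; $\lfloor\cdot\rfloor$ is the floor function. *)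

theory Defs
  imports "HOL-Analysis.Analysis"
begin

definition ennreal_powr :: "ennreal \<Rightarrow> real \<Rightarrow> ennreal" where
  "ennreal_powr x r = (if x = top then top else ennreal (enn2real x powr r))"

definition pV_norm :: "real \<Rightarrow> real \<Rightarrow> ('a::euclidean_space \<Rightarrow> real) \<Rightarrow> ennreal" where
  "pV_norm p V f =
     (SUP \<Omega> \<in> {\<Omega>. open \<Omega> \<and> convex \<Omega> \<and> emeasure lebesgue \<Omega> = ennreal V}.
        ennreal_powr ((\<integral>\<^sup>+ x \<in> \<Omega>. ennreal (\<bar>f x\<bar> powr p) \<partial>lebesgue) / ennreal V) (1 / p))"

end

theory Submission
  imports Defs
begin

text \<open>Fix a direction \<open>e\<close> and an open convex \<open>\<Omega>\<close> with \<open>|\<Omega>| = S\<close>. Because hyperplanes are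
  null, \<open>t \<mapsto> |\<Omega> \<inter> {e \<bullet> x < t}|\<close> is continuous and increasing from \<open>0\<close> to \<open>S\<close>, so its level
  sets cut \<open>\<Omega>\<close> into \<open>n + 1\<close> overlapping slabs of measure exactly \<open>T\<close>, where \<open>n = \<lfloor>S/T\<rfloor>\<close>.
  The slabs are again open and convex, hence each carries at most \<open>T \<parallel>f\<parallel>\<^sub>p\<^sub>,\<^sub>T\<^sup>p\<close> of
  \<open>\<integral>|f|\<^sup>p\<close>, and summing over them gives \<open>\<integral>\<^sub>\<Omega> |f|\<^sup>p \<le> (n + 1) T \<parallel>f\<parallel>\<^sub>p\<^sub>,\<^sub>T\<^sup>p\<close>.\<close>

lemma tendsto_measure_AE_indicator:
  assumes \<Omega>: "\<Omega> \<in> fmeasurable M" and A: "\<And>n. A n \<in> sets M" "\<And>n. A n \<subseteq> \<Omega>"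
    and B: "B \<in> sets M"
    and lim: "AE x in M. (\<lambda>n. indicator (A n) x) \<longlonglongrightarrow> (indicator B x :: real)"
  shows "(\<lambda>n. measure M (A n)) \<longlonglongrightarrow> measure M B"
proof -
  have "(\<lambda>n. integral\<^sup>L M (indicator (A n) :: _ \<Rightarrow> real)) \<longlonglongrightarrow> integral\<^sup>L M (indicator B)"
  proof (rule integral_dominated_convergence[where w="indicator \<Omega>"])
    show "integrable M (indicat_real \<Omega>)"
      using \<Omega> by (auto simp: fmeasurable_def integrable_indicator_iff)
    show "AE x in M. norm (indicat_real (A n) x) \<le> indicat_real \<Omega> x" for n
      using A(2)[of n] by (auto split: split_indicator)
  qed (use A B lim in auto)
  then show ?thesis
    using A B by (simp add: sets.Int_space_eq2)
qed

definition slice_measure :: "'a::euclidean_space set \<Rightarrow> 'a \<Rightarrow> real \<Rightarrow> real" where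
  "slice_measure \<Omega> e t = measure lebesgue (\<Omega> \<inter> {x. e \<bullet> x < t})"

lemma sets_lebesgue_halfspace_lt: "{x::'a::euclidean_space. e \<bullet> x < t} \<in> sets lebesgue"
  using open_halfspace_lt by auto

lemma sets_lebesgue_halfspace_gt: "{x::'a::euclidean_space. t < e \<bullet> x} \<in> sets lebesgue"
  using open_halfspace_gt by auto

lemma hyperplane_null_sets:
  fixes e :: "'a::euclidean_space"
  assumes "e \<noteq> 0"
  shows "{x. e \<bullet> x = t} \<in> null_sets lebesgue"
  using negligible_hyperplane[of e t] assms by (simp add: negligible_iff_null_sets)

lemma mono_slice_measure:
  assumes "\<Omega> \<in> lmeasurable"
  shows "mono (slice_measure \<Omega> e)"
proof (rule monoI)
  fix a b :: real assume "a \<le> b"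
  then show "slice_measure \<Omega> e a \<le> slice_measure \<Omega> e b"
    unfolding slice_measure_def using assms sets_lebesgue_halfspace_lt
    by (intro measure_mono_fmeasurable) (auto intro: fmeasurable_Int_fmeasurable)
qed

lemma continuous_on_slice_measure:
  fixes \<Omega> :: "'a::euclidean_space set"
  assumes \<Omega>: "\<Omega> \<in> lmeasurable" and e: "e \<noteq> 0"
  shows "continuous_on UNIV (slice_measure \<Omega> e)"
proof (rule continuous_at_imp_continuous_on, intro ballI)
  fix t :: real
  show "isCont (slice_measure \<Omega> e) t"
    unfolding continuous_at_sequentially comp_def slice_measure_def
  proof (intro allI impI tendsto_measure_AE_indicator[OF \<Omega>])
    fix X :: "nat \<Rightarrow> real" assume X: "X \<longlonglongrightarrow> t"
    have "AE x in lebesgue. e \<bullet> x \<noteq> t"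
      using hyperplane_null_sets[OF e, of t] by (rule AE_not_in[THEN AE_mp]) simp
    then show "AE x in lebesgue. (\<lambda>n. indicator (\<Omega> \<inter> {x. e \<bullet> x < X n}) x)
        \<longlonglongrightarrow> (indicator (\<Omega> \<inter> {x. e \<bullet> x < t}) x :: real)"
    proof eventually_elim
      case (elim x)
      then have "eventually (\<lambda>n. (e \<bullet> x < X n) = (e \<bullet> x < t)) sequentially"
        using order_tendstoD[OF X, of "e \<bullet> x"] by (cases "e \<bullet> x < t") (auto elim!: eventually_mono)
      then show ?case
        by (rule tendsto_eventually[OF eventually_mono]) (simp add: indicator_def)
    qed
  qed (use \<Omega> sets_lebesgue_halfspace_lt in auto)
qed

lemma slice_measure_tendsto_measure:
  assumes \<Omega>: "\<Omega> \<in> lmeasurable"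
  shows "(\<lambda>n. slice_measure \<Omega> e (real n)) \<longlonglongrightarrow> measure lebesgue \<Omega>"
  unfolding slice_measure_def
proof (rule tendsto_measure_AE_indicator[OF \<Omega>])
  show "AE x in lebesgue. (\<lambda>n. indicator (\<Omega> \<inter> {x. e \<bullet> x < real n}) x) \<longlonglongrightarrow> (indicator \<Omega> x :: real)"
  proof (rule AE_I2)
    fix x
    have "eventually (\<lambda>n. e \<bullet> x < real n) sequentially"
      using filterlim_real_sequentially unfolding filterlim_at_top_dense by blast
    then show "(\<lambda>n. indicator (\<Omega> \<inter> {x. e \<bullet> x < real n}) x) \<longlonglongrightarrow> (indicator \<Omega> x :: real)"
      by (intro tendsto_eventually) (auto simp: indicator_def elim: eventually_mono)
  qed
qed (use \<Omega> sets_lebesgue_halfspace_lt in auto)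

lemma slice_measure_tendsto_0:
  fixes \<Omega> :: "'a::euclidean_space set"
  assumes \<Omega>: "\<Omega> \<in> lmeasurable"
  shows "(\<lambda>n. slice_measure \<Omega> e (- real n)) \<longlonglongrightarrow> 0"
proof -
  have "(\<lambda>n. slice_measure \<Omega> e (- real n)) \<longlonglongrightarrow> measure lebesgue ({} :: 'a set)"
    unfolding slice_measure_def
  proof (rule tendsto_measure_AE_indicator[OF \<Omega>])
    show "AE x in lebesgue. (\<lambda>n. indicator (\<Omega> \<inter> {x. e \<bullet> x < - real n}) x) \<longlonglongrightarrow> (indicator {} x :: real)"
    proof (rule AE_I2)
      fix x
      have "eventually (\<lambda>n. - (e \<bullet> x) < real n) sequentially"
        using filterlim_real_sequentially unfolding filterlim_at_top_dense by blast
      then show "(\<lambda>n. indicator (\<Omega> \<inter> {x. e \<bullet> x < - real n}) x) \<longlonglongrightarrow> (indicator {} x :: real)"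
        by (intro tendsto_eventually) (auto simp: indicator_def elim: eventually_mono)
    qed
  qed (use \<Omega> sets_lebesgue_halfspace_lt in auto)
  then show ?thesis
    by simp
qed

lemma slice_measure_attains:
  fixes \<Omega> :: "'a::euclidean_space set"
  assumes \<Omega>: "\<Omega> \<in> lmeasurable" and e: "e \<noteq> 0" and c: "0 < c" "c < measure lebesgue \<Omega>"
  shows "\<exists>t. slice_measure \<Omega> e t = c"
proof -
  obtain n2 where n2: "c < slice_measure \<Omega> e (real n2)"
    using order_tendstoD(1)[OF slice_measure_tendsto_measure[OF \<Omega>] c(2)]
    by (auto simp: eventually_sequentially)
  obtain n1 where n1: "slice_measure \<Omega> e (- real n1) < c"
    using order_tendstoD(2)[OF slice_measure_tendsto_0[OF \<Omega>] c(1)]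
    by (auto simp: eventually_sequentially)
  have "continuous_on {- real n1 .. real n2} (slice_measure \<Omega> e)"
    using continuous_on_slice_measure[OF \<Omega> e] by (rule continuous_on_subset) simp
  then show ?thesis
    using IVT'[of "slice_measure \<Omega> e" "- real n1" c "real n2"] n1 n2 by auto
qed

lemma measure_Int_halfspace_gt:
  fixes A :: "'a::euclidean_space set"
  assumes A: "A \<in> lmeasurable" and e: "e \<noteq> 0"
  shows "measure lebesgue (A \<inter> {x. t < e \<bullet> x})
           = measure lebesgue A - measure lebesgue (A \<inter> {x. e \<bullet> x < t})"
proof -
  have "measure lebesgue (A \<inter> {x. t < e \<bullet> x}) = measure lebesgue (A \<inter> {x. t < e \<bullet> x} \<union> A \<inter> {x. e \<bullet> x = t})"
    using A sets_lebesgue_halfspace_gt null_set_Int1[OF hyperplane_null_sets[OF e, of t]]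
    by (intro measure_Un_null_set[symmetric]) auto
  also have "A \<inter> {x. t < e \<bullet> x} \<union> A \<inter> {x. e \<bullet> x = t} = A - A \<inter> {x. e \<bullet> x < t}"
    by auto
  also have "measure lebesgue \<dots> = measure lebesgue A - measure lebesgue (A \<inter> {x. e \<bullet> x < t})"
    using A sets_lebesgue_halfspace_lt by (intro measure_Diff) (auto simp: fmeasurable_def)
  finally show ?thesis .
qed

lemma measure_slab:
  fixes \<Omega> :: "'a::euclidean_space set"
  assumes \<Omega>: "\<Omega> \<in> lmeasurable" and e: "e \<noteq> 0" and "a \<le> b"
  shows "measure lebesgue (\<Omega> \<inter> {x. e \<bullet> x < b} \<inter> {x. a < e \<bullet> x})
           = slice_measure \<Omega> e b - slice_measure \<Omega> e a"
proof -
  have "\<Omega> \<inter> {x. e \<bullet> x < b} \<in> lmeasurable"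
    using \<Omega> sets_lebesgue_halfspace_lt by (rule fmeasurable_Int_fmeasurable)
  moreover have "\<Omega> \<inter> {x. e \<bullet> x < b} \<inter> {x. e \<bullet> x < a} = \<Omega> \<inter> {x. e \<bullet> x < a}"
    using \<open>a \<le> b\<close> by auto
  ultimately show ?thesis
    using measure_Int_halfspace_gt[OF _ e] by (simp add: slice_measure_def)
qed

lemma chain_of_intervals_cover:
  fixes \<alpha> \<beta> :: "nat \<Rightarrow> real"
  assumes "\<And>j. j \<le> m \<Longrightarrow> \<alpha> (Suc j) < \<beta> j"
  shows "t < \<beta> 0 \<or> (\<exists>j\<in>{1..m}. \<alpha> j < t \<and> t < \<beta> j) \<or> \<alpha> (Suc m) < t"
  using assms
proof (induction m)
  case 0
  then show ?case by force
next
  case (Suc m)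
  then consider "t < \<beta> 0" | "\<exists>j\<in>{1..m}. \<alpha> j < t \<and> t < \<beta> j" | "\<alpha> (Suc m) < t"
    by fastforce
  then show ?case
  proof cases
    case 3
    moreover have "\<alpha> (Suc (Suc m)) < \<beta> (Suc m)"
      using Suc.prems by simp
    ultimately show ?thesis
      by (cases "t < \<beta> (Suc m)") auto
  qed auto
qed

lemma slice_levels:
  fixes \<Omega> :: "'a::euclidean_space set"
  assumes \<Omega>: "\<Omega> \<in> lmeasurable" "measure lebesgue \<Omega> = S" and e: "e \<noteq> 0"
    and T: "0 < T" "T < S" "S < (real n + 1) * T"
  obtains \<alpha> \<beta> where "slice_measure \<Omega> e (\<beta> 0) = T"
    and "S - slice_measure \<Omega> e (\<alpha> n) = T"
    and "\<And>j. 1 \<le> j \<Longrightarrow> j < n \<Longrightarrow> slice_measure \<Omega> e (\<beta> j) - slice_measure \<Omega> e (\<alpha> j) = T"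
    and "\<And>j. 1 \<le> j \<Longrightarrow> j < n \<Longrightarrow> \<alpha> j < \<beta> j"
    and "\<And>j. j < n \<Longrightarrow> \<alpha> (Suc j) < \<beta> j"
proof -
  let ?g = "slice_measure \<Omega> e"
  have n: "n \<noteq> 0"
    using T by (cases n) auto
  obtain \<tau> where \<tau>: "\<And>c. 0 < c \<Longrightarrow> c < S \<Longrightarrow> ?g (\<tau> c) = c"
    using slice_measure_attains[OF \<Omega>(1) e] unfolding \<Omega>(2) by metis
  have less_if_slice_less: "a < b" if "?g a < ?g b" for a b
    using mono_slice_measure[OF \<Omega>(1), of e] that by (meson monoD not_less)
  define \<delta> where "\<delta> = (S - T) / n"
  have \<delta>: "0 < \<delta>" "\<delta> < T" "real n * \<delta> = S - T"
    using T n by (auto simp: \<delta>_def field_simps)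
  txt \<open>The levels are \<open>j \<delta>\<close> and \<open>j \<delta> + T\<close>; consecutive slabs overlap because \<open>\<delta> < T\<close>.\<close>
  define \<alpha> where "\<alpha> j = \<tau> (real j * \<delta>)" for j
  define \<beta> where "\<beta> j = \<tau> (real j * \<delta> + T)" for j
  have g_\<alpha>: "?g (\<alpha> j) = real j * \<delta>" if "1 \<le> j" "j \<le> n" for j
  proof -
    have "real j * \<delta> \<le> real n * \<delta>"
      using that \<delta> by (intro mult_right_mono) auto
    then show ?thesis
      unfolding \<alpha>_def using that \<delta> T by (intro \<tau>) auto
  qed
  have g_\<beta>: "?g (\<beta> j) = real j * \<delta> + T" if "j < n" for j
  proof -
    have "real j * \<delta> < real n * \<delta>"
      using that \<delta> by (intro mult_strict_right_mono) auto
    then show ?thesis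
      unfolding \<beta>_def using that \<delta> T by (intro \<tau>) (auto intro: add_nonneg_pos)
  qed
  show ?thesis
  proof (rule that[of \<beta> \<alpha>])
    show "?g (\<beta> 0) = T" "S - ?g (\<alpha> n) = T"
      using g_\<beta>[of 0] g_\<alpha>[of n] \<delta> n by simp_all
    show "?g (\<beta> j) - ?g (\<alpha> j) = T" if "1 \<le> j" "j < n" for j
      using that g_\<alpha>[of j] g_\<beta>[of j] by simp
    show "\<alpha> j < \<beta> j" if "1 \<le> j" "j < n" for j
      using that g_\<alpha>[of j] g_\<beta>[of j] T by (intro less_if_slice_less[of "\<alpha> j"]) simp
    show "\<alpha> (Suc j) < \<beta> j" if "j < n" for j
      using that g_\<alpha>[of "Suc j"] g_\<beta>[of j] \<delta>
      by (intro less_if_slice_less[of "\<alpha> (Suc j)"]) (simp add: algebra_simps)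
  qed
qed

lemma open_convex_cover_by_slabs:
  fixes \<Omega> :: "'a::euclidean_space set"
  assumes \<Omega>: "open \<Omega>" "convex \<Omega>" "emeasure lebesgue \<Omega> = ennreal S"
    and T: "0 < T" "T < S" "S < (real n + 1) * T"
  shows "\<exists>C. (\<forall>j\<le>n. open (C j) \<and> convex (C j) \<and> emeasure lebesgue (C j) = ennreal T)
             \<and> \<Omega> \<subseteq> (\<Union>j\<le>n. C j)"
proof -
  obtain m where n: "n = Suc m"
    using T not0_implies_Suc by (cases n) auto
  obtain e :: 'a where "e \<in> Basis"
    using nonempty_Basis by blast
  then have e: "e \<noteq> 0"
    by auto
  have \<Omega>_fin: "\<Omega> \<in> lmeasurable" and \<Omega>_measure: "measure lebesgue \<Omega> = S"
    using \<Omega> T by (auto simp: fmeasurable_def measure_def)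
  obtain \<alpha> \<beta> where first_slab: "slice_measure \<Omega> e (\<beta> 0) = T"
    and last_slab: "S - slice_measure \<Omega> e (\<alpha> n) = T"
    and middle_slab: "\<And>j. 1 \<le> j \<Longrightarrow> j < n \<Longrightarrow> slice_measure \<Omega> e (\<beta> j) - slice_measure \<Omega> e (\<alpha> j) = T"
    and ordered: "\<And>j. 1 \<le> j \<Longrightarrow> j < n \<Longrightarrow> \<alpha> j < \<beta> j"
    and overlap: "\<And>j. j < n \<Longrightarrow> \<alpha> (Suc j) < \<beta> j"
    using slice_levels[OF \<Omega>_fin \<Omega>_measure e T] by blast
  define C where "C j =
      (if j = 0 then \<Omega> \<inter> {x. e \<bullet> x < \<beta> 0}
       else if j = n then \<Omega> \<inter> {x. \<alpha> n < e \<bullet> x}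
       else \<Omega> \<inter> {x. e \<bullet> x < \<beta> j} \<inter> {x. \<alpha> j < e \<bullet> x})" for j
  have measure_C: "measure lebesgue (C j) = T" if j: "j \<le> n" for j
  proof -
    consider "j = 0" | "j = n" | "1 \<le> j" "j < n"
      using j by linarith
    then show ?thesis
    proof cases
      case 1
      then show ?thesis
        using first_slab by (simp add: C_def slice_measure_def)
    next
      case 2
      then show ?thesis
        using last_slab measure_Int_halfspace_gt[OF \<Omega>_fin e] n
        by (simp add: C_def slice_measure_def \<Omega>_measure)
    next
      case 3
      then show ?thesis
        using measure_slab[OF \<Omega>_fin e less_imp_le[OF ordered[OF 3]]] middle_slab[OF 3] by (simp add: C_def)
    qed
  qed
  have "open (C j) \<and> convex (C j) \<and> emeasure lebesgue (C j) = ennreal T" if "j \<le> n" for j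
  proof (intro conjI)
    have "C j \<in> lmeasurable"
      using \<Omega>_fin sets_lebesgue_halfspace_lt sets_lebesgue_halfspace_gt
      by (auto simp: C_def intro!: fmeasurable_Int_fmeasurable)
    then show "emeasure lebesgue (C j) = ennreal T"
      using emeasure_eq_measure2 measure_C[OF that] by metis
    show "open (C j)" "convex (C j)"
      using \<Omega> by (auto simp: C_def intro!: open_Int convex_Int open_halfspace_lt open_halfspace_gt
          convex_halfspace_lt convex_halfspace_gt)
  qed
  moreover have "\<Omega> \<subseteq> (\<Union>j\<le>n. C j)"
  proof
    fix x assume "x \<in> \<Omega>"
    with chain_of_intervals_cover[of m \<alpha> \<beta> "e \<bullet> x"] overlap n
    show "x \<in> (\<Union>j\<le>n. C j)"
      by (auto simp: C_def)
  qed
  ultimately show ?thesis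
    by blast
qed

lemma powr_le_iff_le_powr_inverse:
  fixes a b r :: real
  assumes a: "0 \<le> a" and b: "0 \<le> b" and r: "0 < r"
  shows "a powr r \<le> b \<longleftrightarrow> a \<le> b powr (1 / r)"
proof
  assume "a powr r \<le> b"
  then have "(a powr r) powr (1 / r) \<le> b powr (1 / r)"
    using r by (intro powr_mono2) auto
  then show "a \<le> b powr (1 / r)"
    using a r by (simp add: powr_powr)
next
  assume "a \<le> b powr (1 / r)"
  then have "a powr r \<le> (b powr (1 / r)) powr r"
    using a r by (intro powr_mono2) auto
  then show "a powr r \<le> b"
    using b r by (simp add: powr_powr)
qed

lemma ennreal_powr_le_iff:
  assumes r: "0 < r"
  shows "ennreal_powr x r \<le> y \<longleftrightarrow> x \<le> ennreal_powr y (1 / r)"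
proof (cases x rule: ennreal_cases)
  case (real a)
  then show ?thesis
  proof (cases y rule: ennreal_cases)
    case (real b)
    with \<open>x = ennreal a\<close> \<open>0 \<le> a\<close> r show ?thesis
      by (simp add: ennreal_powr_def powr_le_iff_le_powr_inverse)
  qed (simp add: ennreal_powr_def)
qed (simp add: ennreal_powr_def top_unique)

lemma ennreal_powr_mono:
  assumes "x \<le> y" "0 \<le> r"
  shows "ennreal_powr x r \<le> ennreal_powr y r"
  using assms
  by (cases x rule: ennreal_cases; cases y rule: ennreal_cases)
    (auto simp: ennreal_powr_def top_unique intro!: powr_mono2)

lemma set_nn_integral_le_sum_cover:
  assumes f: "f \<in> borel_measurable M" and I: "finite I" and C: "\<And>j. j \<in> I \<Longrightarrow> C j \<in> sets M"
    and cover: "\<Omega> \<subseteq> (\<Union>j\<in>I. C j)"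
  shows "(\<integral>\<^sup>+x\<in>\<Omega>. f x \<partial>M) \<le> (\<Sum>j\<in>I. \<integral>\<^sup>+x\<in>C j. f x \<partial>M)"
proof -
  have "(\<integral>\<^sup>+x\<in>\<Omega>. f x \<partial>M) \<le> (\<integral>\<^sup>+x. (\<Sum>j\<in>I. f x * indicator (C j) x) \<partial>M)"
  proof (rule nn_integral_mono)
    fix x
    show "f x * indicator \<Omega> x \<le> (\<Sum>j\<in>I. f x * indicator (C j) x)"
    proof (cases "x \<in> \<Omega>")
      case True
      then obtain j where j: "j \<in> I" "x \<in> C j"
        using cover by auto
      then have "f x * indicator \<Omega> x = f x * indicator (C j) x"
        using True by simp
      also have "\<dots> \<le> (\<Sum>j\<in>I. f x * indicator (C j) x)"
        using I j by (intro member_le_sum) auto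
      finally show ?thesis .
    qed simp
  qed
  also have "\<dots> = (\<Sum>j\<in>I. \<integral>\<^sup>+x\<in>C j. f x \<partial>M)"
    using f C by (intro nn_integral_sum) auto
  finally show ?thesis .
qed

lemma set_nn_integral_le_pV_norm:
  fixes f :: "'a::euclidean_space \<Rightarrow> real"
  assumes p: "0 < p" and V: "0 < V"
    and \<Omega>: "open \<Omega>" "convex \<Omega>" "emeasure lebesgue \<Omega> = ennreal V"
  shows "(\<integral>\<^sup>+x\<in>\<Omega>. ennreal (\<bar>f x\<bar> powr p) \<partial>lebesgue) \<le> ennreal V * ennreal_powr (pV_norm p V f) p"
proof -
  let ?I = "\<integral>\<^sup>+x\<in>\<Omega>. ennreal (\<bar>f x\<bar> powr p) \<partial>lebesgue"
  have "ennreal_powr (?I / ennreal V) (1 / p) \<le> pV_norm p V f"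
    unfolding pV_norm_def using \<Omega> by (intro SUP_upper) auto
  then have bound: "?I / ennreal V \<le> ennreal_powr (pV_norm p V f) p"
    using p by (simp add: ennreal_powr_le_iff)
  have "?I = ?I * ennreal V / ennreal V"
    using V by (intro mult_divide_eq_ennreal[symmetric]) auto
  also have "\<dots> = ennreal V * (?I / ennreal V)"
    by (simp add: ennreal_times_divide mult.commute)
  also have "\<dots> \<le> ennreal V * ennreal_powr (pV_norm p V f) p"
    using bound by (rule mult_left_mono) simp
  finally show ?thesis .
qed

lemma pV_norm_powr_le_of_cover:
  fixes f :: "'a::euclidean_space \<Rightarrow> real" and n :: nat
  assumes p: "0 < p" and T: "0 < T" and S: "0 < S" and f: "f \<in> borel_measurable lebesgue"
    and cover: "\<And>\<Omega> :: 'a set. open \<Omega> \<Longrightarrow> convex \<Omega> \<Longrightarrow> emeasure lebesgue \<Omega> = ennreal S \<Longrightarrow>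
      \<exists>C. (\<forall>j\<le>n. open (C j) \<and> convex (C j) \<and> emeasure lebesgue (C j) = ennreal T)
          \<and> \<Omega> \<subseteq> (\<Union>j\<le>n. C j)"
  shows "ennreal_powr (pV_norm p S f) p
           \<le> ennreal ((real n + 1) * T / S) * ennreal_powr (pV_norm p T f) p"
proof -
  let ?P = "ennreal_powr (pV_norm p T f) p"
  let ?c = "ennreal ((real n + 1) * T / S)"
  have "(\<integral>\<^sup>+x\<in>\<Omega>. ennreal (\<bar>f x\<bar> powr p) \<partial>lebesgue) / ennreal S \<le> ?c * ?P"
    if \<Omega>: "open \<Omega>" "convex \<Omega>" "emeasure lebesgue \<Omega> = ennreal S" for \<Omega>
  proof -
    obtain C where C: "\<And>j. j \<le> n \<Longrightarrow> open (C j) \<and> convex (C j) \<and> emeasure lebesgue (C j) = ennreal T"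
      and cov: "\<Omega> \<subseteq> (\<Union>j\<le>n. C j)"
      using cover[OF \<Omega>] by blast
    have "(\<integral>\<^sup>+x\<in>\<Omega>. ennreal (\<bar>f x\<bar> powr p) \<partial>lebesgue)
        \<le> (\<Sum>j\<le>n. \<integral>\<^sup>+x\<in>C j. ennreal (\<bar>f x\<bar> powr p) \<partial>lebesgue)"
      using C by (intro set_nn_integral_le_sum_cover[OF _ _ _ cov]) (use f in auto)
    also have "\<dots> \<le> (\<Sum>j\<le>n. ennreal T * ?P)"
      by (intro sum_mono set_nn_integral_le_pV_norm[OF p T]) (auto dest: C)
    also have "\<dots> = ennreal ((real n + 1) * T) * ?P"
      using T by (simp add: ennreal_mult' mult.assoc add.commute ennreal_of_nat_eq_real_of_nat)
    finally have "(\<integral>\<^sup>+x\<in>\<Omega>. ennreal (\<bar>f x\<bar> powr p) \<partial>lebesgue) / ennreal S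
        \<le> ennreal ((real n + 1) * T) * ?P / ennreal S"
      by (rule divide_right_mono_ennreal)
    also have "\<dots> = ?c * ?P"
      using T S by (simp add: ennreal_times_divide[symmetric] ennreal_divide_times divide_ennreal mult.commute)
    finally show ?thesis .
  qed
  then have "pV_norm p S f \<le> ennreal_powr (?c * ?P) (1 / p)"
    unfolding pV_norm_def using p by (auto intro!: SUP_least ennreal_powr_mono)
  then show ?thesis
    using p by (simp add: ennreal_powr_le_iff)
qed

theorem corollary2p5:
  fixes f :: "'a::euclidean_space \<Rightarrow> real" and p S T :: real
  assumes "1 \<le> p" and "0 < T" and "T < S"
    and "f \<in> borel_measurable lebesgue"
    and "pV_norm p S f < top"
  shows "ennreal_powr (pV_norm p S f) p
           \<le> ennreal ((real_of_int \<lfloor>S / T\<rfloor> + 1) * T / S) * ennreal_powr (pV_norm p T f) p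
       \<and> ennreal ((real_of_int \<lfloor>S / T\<rfloor> + 1) * T / S) * ennreal_powr (pV_norm p T f) p
           \<le> 2 * ennreal_powr (pV_norm p T f) p"
proof -
  define n where "n = nat \<lfloor>S / T\<rfloor>"
  have n: "real n = real_of_int \<lfloor>S / T\<rfloor>"
    using assms(2,3) by (simp add: n_def)
  have "real n \<le> S / T" "S / T < real n + 1"
    unfolding n by linarith+
  then have n_bounds: "real n * T \<le> S" "S < (real n + 1) * T"
    using assms(2) by (simp_all add: pos_le_divide_eq pos_divide_less_eq)
  have "ennreal_powr (pV_norm p S f) p \<le> ennreal ((real n + 1) * T / S) * ennreal_powr (pV_norm p T f) p"
    using assms(1-4) n_bounds(2)
    by (intro pV_norm_powr_le_of_cover open_convex_cover_by_slabs) auto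
  moreover have "(real n + 1) * T / S \<le> 2"
    using n_bounds(1) assms(2,3) by (simp add: pos_divide_le_eq algebra_simps)
  then have "ennreal ((real n + 1) * T / S) \<le> 2"
    using ennreal_leI by fastforce
  then have "ennreal ((real n + 1) * T / S) * ennreal_powr (pV_norm p T f) p
      \<le> 2 * ennreal_powr (pV_norm p T f) p"
    by (rule mult_right_mono) simp
  ultimately show ?thesis
    unfolding n by simp
qed

end
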